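(* Let $G$ be a finite group, $S$ a generating set of $G$, and $X \subseteq S$. Assume: (i) $\langle X \rangle$ is abelian and nontrivial; (ii) for each $g \in G$, either $g$ centralizes every element of $\langle X \rangle$, or $g$ inverts every element of $\langle X \rangle$ (i.e., $g^{-1}yg = y^{-1}$ for all $y \in \langle X \rangle$); (iii) $\mathrm{Cay}(\langle X \rangle; X)$ has a hamiltonian cycle; and (iv) $\mathrm{Cay}(G/\langle X \rangle; S)$ has a hamiltonian path. Then $\mathrm{Cay}(G;S)$ has a hamiltonian cycle.
   Context: For a group $G$ and a subset $S \subseteq G$, the Cayley graph $\mathrm{Cay}(G;S)$ has vertex set $G$, with $g$ adjacent to $gs$ for every $g \in G$ and $s \in S \cup S^{-1}$. Hypothesis (ii) implies $\langle X \rangle$ is normal in $G$; $\mathrm{Cay}(G/\langle X \rangle;S)$ denotes the Cayley graph of the quotient group with respect to the image of $S$. A hamiltonian path visits every vertex exactly once. *)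

theory Defs
  imports "HOL-Algebra.Algebra"
begin

definition cay_adj :: "('a, 'b) monoid_scheme \<Rightarrow> 'a set \<Rightarrow> 'a \<Rightarrow> 'a \<Rightarrow> bool" where
  "cay_adj G S g h \<longleftrightarrow> (\<exists>s\<in>S. h = g \<otimes>\<^bsub>G\<^esub> s \<or> h = g \<otimes>\<^bsub>G\<^esub> inv\<^bsub>G\<^esub> s)"

definition ham_cycle :: "'a set \<Rightarrow> ('a \<Rightarrow> 'a \<Rightarrow> bool) \<Rightarrow> bool" where
  "ham_cycle V adj \<longleftrightarrow> (\<exists>vs. vs \<noteq> [] \<and> distinct vs \<and> set vs = V \<and>
      (\<forall>i < length vs. adj (vs ! i) (vs ! ((Suc i) mod length vs))))"

definition ham_path :: "'a set \<Rightarrow> ('a \<Rightarrow> 'a \<Rightarrow> bool) \<Rightarrow> bool" where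
  "ham_path V adj \<longleftrightarrow> (\<exists>vs. distinct vs \<and> set vs = V \<and>
      (\<forall>i. Suc i < length vs \<longrightarrow> adj (vs ! i) (vs ! Suc i)))"

end

theory Submission
  imports Defs
begin

text \<open>
  Given a hamiltonian cycle c_0, ..., c_{n-1} of Cay(H;T) and a
  hamiltonian path C_0, ..., C_{m-1} of Cay(G/H;S), lift the path to representatives
  t_0, ..., t_{m-1} with t_{k+1} = t_k s_k, where s_k or its inverse lies in S.  Each s_k
  centralises or inverts H, so we keep a running orientation flag sigma_k (flipped whenever
  s_k inverts H) and map the prism P_m x C_n to G by  (k,j) |-> t_k c_j^{+-1},  the sign
  being sigma_k.  This map is a bijection (its rows are the cosets C_k) and it sends prism
  edges to edges of Cay(G;S): rows use the twisted T-edges of the cycle, columns the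
  generators s_k.  A boustrophedon traversal gives a hamiltonian cycle of the prism
  (n >= 2 since H is nontrivial), and its image is a hamiltonian cycle of Cay(G;S).
\<close>

section \<open>Hamiltonian cycles of the prism graph\<close>

definition prism_adj :: "nat \<Rightarrow> nat \<times> nat \<Rightarrow> nat \<times> nat \<Rightarrow> bool" where
  "prism_adj n p q \<longleftrightarrow>
     (fst p = fst q \<and> (snd q = Suc (snd p) mod n \<or> snd p = Suc (snd q) mod n))
     \<or> (snd p = snd q \<and> (fst q = Suc (fst p) \<or> fst p = Suc (fst q)))"

lemma prism_row_forward:
  assumes "b \<le> n"
  shows "successively (prism_adj n) (map (\<lambda>j. (k, j)) [a..<b])"
  using assms
proof (induction b)
  case (Suc b)
  then show ?case
    by (cases "a \<le> b") (auto simp: successively_append_iff prism_adj_def last_map)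
qed simp

lemma prism_row_backward:
  assumes "b \<le> n" "0 < a"
  shows "successively (prism_adj n) (map (\<lambda>j. (k, n - j)) [a..<b])"
  using assms
proof (induction b)
  case (Suc b)
  then show ?case
    by (cases "a \<le> b") (auto simp: successively_append_iff prism_adj_def last_map Suc_diff_Suc)
qed simp

text \<open>Boustrophedon path through rows 0..m: it starts at (m,0) and ends at a neighbour
  (m,1) or (m,n-1) of its start, so it closes up to a cycle.\<close>
lemma prism_ham_path:
  assumes "n \<ge> 2"
  shows "\<exists>vs d. vs \<noteq> [] \<and> hd vs = (m, 0) \<and> last vs = (m, d) \<and> (d = 1 \<or> d = n - 1) \<and>
     distinct vs \<and> set vs = {0..<Suc m} \<times> {0..<n} \<and> successively (prism_adj n) vs"
proof (induction m)
  case 0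
  show ?case
    using assms prism_row_forward[of n n 0 0]
    by (intro exI[of _ "map (\<lambda>j. (0, j)) [0..<n]"] exI[of _ "n - 1"])
      (auto simp: distinct_map inj_on_def hd_map last_map hd_upt)
next
  case (Suc m)
  then obtain vs d where vs: "vs \<noteq> []" "hd vs = (m, 0)" "last vs = (m, d)" "d = 1 \<or> d = n - 1"
    "distinct vs" "set vs = {0..<Suc m} \<times> {0..<n}" "successively (prism_adj n) vs"
    by blast
  have down: "prism_adj n (Suc m, 0) (m, 0)" "prism_adj n (m, d) (Suc m, d)"
    by (auto simp: prism_adj_def)
  show ?case
  proof (cases "d = 1")
    case True
    \<comment> \<open>enter row m+1 at column 1 and run forwards to column n-1\<close>
    let ?row = "map (\<lambda>j. (Suc m, j)) [1..<n]"
    have "successively (prism_adj n) ?row" by (rule prism_row_forward) simp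
    then show ?thesis
      using vs True assms down
      by (intro exI[of _ "(Suc m, 0) # vs @ ?row"] exI[of _ "n - 1"])
        (auto simp: distinct_map inj_on_def successively_append_iff successively_Cons
          hd_map last_map)
  next
    case False
    \<comment> \<open>enter row m+1 at column n-1 and run backwards to column 1\<close>
    let ?row = "map (\<lambda>j. (Suc m, n - j)) [1..<n]"
    have "successively (prism_adj n) ?row" by (rule prism_row_backward) simp_all
    moreover have "(\<lambda>j. (Suc m, n - j)) ` {Suc 0..<n} = {Suc m} \<times> {Suc 0..<n}"
    proof (intro equalityI subsetI)
      fix p assume "p \<in> {Suc m} \<times> {Suc 0..<n}"
      then show "p \<in> (\<lambda>j. (Suc m, n - j)) ` {Suc 0..<n}"
        by (auto intro!: image_eqI[where x = "n - snd p"])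
    qed auto
    ultimately show ?thesis
      using vs False assms down
      by (intro exI[of _ "(Suc m, 0) # vs @ ?row"] exI[of _ 1])
        (auto simp: distinct_map inj_on_def successively_append_iff successively_Cons
          hd_map last_map)
  qed
qed

lemma ham_cycleI_closed_path:
  assumes "vs \<noteq> []" "distinct vs" "set vs = V" "successively adj vs" "adj (last vs) (hd vs)"
  shows "ham_cycle V adj"
  unfolding ham_cycle_def
proof (intro exI conjI allI impI)
  fix i assume i: "i < length vs"
  show "adj (vs ! i) (vs ! (Suc i mod length vs))"
  proof (cases "Suc i < length vs")
    case True
    then show ?thesis using successively_nth[OF assms(4)] by simp
  next
    case False
    then have "i = length vs - 1" using i by simp
    then show ?thesis using assms(1,5) by (simp add: last_conv_nth hd_conv_nth)
  qed
qed (use assms in auto)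

lemma prism_ham_cycle:
  assumes "n \<ge> 2"
  shows "ham_cycle ({0..<Suc m} \<times> {0..<n}) (prism_adj n)"
proof -
  obtain vs d where vs: "vs \<noteq> []" "hd vs = (m, 0)" "last vs = (m, d)" "d = 1 \<or> d = n - 1"
    "distinct vs" "set vs = {0..<Suc m} \<times> {0..<n}" "successively (prism_adj n) vs"
    using prism_ham_path[OF assms] by blast
  have "prism_adj n (last vs) (hd vs)"
    using vs(2-4) assms by (auto simp: prism_adj_def)
  then show ?thesis using vs by (intro ham_cycleI_closed_path) auto
qed

lemma ham_cycle_image:
  assumes "ham_cycle V adj" "bij_betw f V W"
    and "\<And>p q. p \<in> V \<Longrightarrow> q \<in> V \<Longrightarrow> adj p q \<Longrightarrow> adj' (f p) (f q)"
  shows "ham_cycle W adj'"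
proof -
  obtain vs where vs: "vs \<noteq> []" "distinct vs" "set vs = V"
    "\<forall>i < length vs. adj (vs ! i) (vs ! (Suc i mod length vs))"
    using assms(1) unfolding ham_cycle_def by blast
  have "adj' (f (vs ! i)) (f (vs ! (Suc i mod length vs)))" if "i < length vs" for i
  proof -
    have "Suc i mod length vs < length vs" using that by (intro mod_less_divisor) linarith
    then show ?thesis using assms(3) vs that nth_mem by blast
  qed
  moreover have "distinct (map f vs)" "set (map f vs) = W"
    using vs assms(2) by (auto simp: distinct_map bij_betw_def inj_on_subset)
  ultimately show ?thesis
    unfolding ham_cycle_def using vs(1) by (intro exI[of _ "map f vs"]) simp
qed

lemma prism_adj_preserved:
  assumes sym: "\<And>p q. p \<in> {0..<m} \<times> {0..<n} \<Longrightarrow> q \<in> {0..<m} \<times> {0..<n} \<Longrightarrow>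
      A (f q) (f p) \<Longrightarrow> A (f p) (f q)"
    and row: "\<And>k j. k < m \<Longrightarrow> j < n \<Longrightarrow> A (f (k, j)) (f (k, Suc j mod n))"
    and column: "\<And>k j. Suc k < m \<Longrightarrow> j < n \<Longrightarrow> A (f (k, j)) (f (Suc k, j))"
    and p: "p \<in> {0..<m} \<times> {0..<n}" and q: "q \<in> {0..<m} \<times> {0..<n}"
    and "prism_adj n p q"
  shows "A (f p) (f q)"
proof -
  obtain k j k' j' where pq: "p = (k, j)" "q = (k', j')" by (cases p, cases q) auto
  from \<open>prism_adj n p q\<close> consider
      "k' = k" "j' = Suc j mod n" | "k' = k" "j = Suc j' mod n"
    | "j' = j" "k' = Suc k" | "j' = j" "k = Suc k'"
    unfolding prism_adj_def pq by auto
  then show ?thesis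
  proof cases
    case 1
    then show ?thesis using p pq row by auto
  next
    case 2
    then have "A (f q) (f p)" using q pq row by auto
    then show ?thesis using sym p q by blast
  next
    case 3
    then show ?thesis using p q pq column by auto
  next
    case 4
    then have "A (f q) (f p)" using p pq column by auto
    then show ?thesis using sym p q by blast
  qed
qed

context group
begin

lemma cay_adj_sym:
  assumes "S \<subseteq> carrier G" "a \<in> carrier G" "cay_adj G S a b"
  shows "cay_adj G S b a"
proof -
  from assms(3) obtain s where s: "s \<in> S" "b = a \<otimes> s \<or> b = a \<otimes> inv s"
    unfolding cay_adj_def by blast
  have "s \<in> carrier G" using s(1) assms(1) by blast
  then have "a = b \<otimes> inv s \<or> a = b \<otimes> s"
    using s(2) assms(2) by (auto simp: m_assoc)
  then show ?thesis using s(1) unfolding cay_adj_def by blast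
qed

lemma cay_adjI:
  assumes "s \<in> carrier G" "s \<in> S \<or> inv s \<in> S"
  shows "cay_adj G S a (a \<otimes> s)"
proof (cases "s \<in> S")
  case False
  then have "inv s \<in> S" "a \<otimes> s = a \<otimes> inv (inv s)" using assms by simp_all
  then show ?thesis unfolding cay_adj_def by blast
qed (auto simp: cay_adj_def)

lemma cay_adj_lmult:
  assumes "S \<subseteq> carrier G" "a \<in> carrier G" "x \<in> carrier G" "cay_adj G S x y"
  shows "cay_adj G S (a \<otimes> x) (a \<otimes> y)"
proof -
  from assms(4) obtain s where s: "s \<in> S" "y = x \<otimes> s \<or> y = x \<otimes> inv s"
    unfolding cay_adj_def by blast
  have "s \<in> carrier G" using s(1) assms(1) by blast
  then have "a \<otimes> y = a \<otimes> x \<otimes> s \<or> a \<otimes> y = a \<otimes> x \<otimes> inv s"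
    using s(2) assms(2,3) by (auto simp: m_assoc)
  then show ?thesis using s(1) unfolding cay_adj_def by blast
qed

lemma normal_if_centralised_or_inverted:
  assumes H: "subgroup H G"
    and dich: "\<forall>g\<in>carrier G. (\<forall>y\<in>H. g \<otimes> y = y \<otimes> g) \<or> (\<forall>y\<in>H. inv g \<otimes> y \<otimes> g = inv y)"
  shows "H \<lhd> G"
  unfolding normal_inv_iff
proof (intro conjI H ballI)
  fix x h assume x: "x \<in> carrier G" and h: "h \<in> H"
  have hc: "h \<in> carrier G" using subgroup.mem_carrier[OF H h] .
  have ix: "inv x \<in> carrier G" using x by simp
  from bspec[OF dich ix] have "x \<otimes> h \<otimes> inv x = h \<or> x \<otimes> h \<otimes> inv x = inv h"
  proof
    assume "\<forall>y\<in>H. inv x \<otimes> y = y \<otimes> inv x"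
    then have comm: "inv x \<otimes> h = h \<otimes> inv x" using h by (rule bspec)
    have "x \<otimes> h \<otimes> inv x = x \<otimes> (h \<otimes> inv x)" using x hc by (simp add: m_assoc)
    also have "\<dots> = x \<otimes> (inv x \<otimes> h)" by (simp only: comm)
    also have "\<dots> = h" using x hc by (simp add: m_assoc[symmetric])
    finally show ?thesis by (rule disjI1)
  next
    assume "\<forall>y\<in>H. inv (inv x) \<otimes> y \<otimes> inv x = inv y"
    then have "inv (inv x) \<otimes> h \<otimes> inv x = inv h" using h by (rule bspec)
    then show ?thesis by (simp only: inv_inv[OF x] disjI2)
  qed
  then show "x \<otimes> h \<otimes> inv x \<in> H"
  proof
    assume "x \<otimes> h \<otimes> inv x = h"
    then show ?thesis using h by simp
  next
    assume "x \<otimes> h \<otimes> inv x = inv h"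
    then show ?thesis using subgroup.m_inv_closed[OF H h] by simp
  qed
qed

end

section \<open>Twisting by inversion\<close>

text \<open>The identity or inversion, according to a flag; on an abelian subgroup both are
  automorphisms.\<close>
definition twist :: "('a, 'b) monoid_scheme \<Rightarrow> bool \<Rightarrow> 'a \<Rightarrow> 'a" where
  "twist G b h = (if b then h else inv\<^bsub>G\<^esub> h)"

primrec orientation :: "(nat \<Rightarrow> bool) \<Rightarrow> nat \<Rightarrow> bool" where
  "orientation c 0 = True"
| "orientation c (Suc k) = (orientation c k \<longleftrightarrow> c k)"

context group
begin

lemma twist_True [simp]: "twist G True h = h"
  by (simp add: twist_def)

lemma twist_closed: "subgroup H G \<Longrightarrow> h \<in> H \<Longrightarrow> twist G b h \<in> H"
  unfolding twist_def by (simp add: subgroup.m_inv_closed)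

lemma twist_twist: "h \<in> carrier G \<Longrightarrow> twist G c (twist G b h) = twist G (b \<longleftrightarrow> c) h"
  unfolding twist_def by simp

lemma inj_on_twist:
  assumes "H \<subseteq> carrier G"
  shows "inj_on (twist G b) H"
proof (rule inj_onI)
  fix x y assume "x \<in> H" "y \<in> H" and eq: "twist G b x = twist G b y"
  then have "x \<in> carrier G" "y \<in> carrier G" using assms by blast+
  moreover have "twist G b (twist G b x) = twist G b (twist G b y)" by (simp only: eq)
  ultimately show "x = y" by (simp add: twist_twist)
qed

lemma twist_mult:
  assumes x: "x \<in> carrier G" and y: "y \<in> carrier G" and comm: "x \<otimes> y = y \<otimes> x"
  shows "twist G b (x \<otimes> y) = twist G b x \<otimes> twist G b y"
proof -
  have "inv (x \<otimes> y) = inv (y \<otimes> x)" by (simp only: comm)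
  also have "\<dots> = inv x \<otimes> inv y" using inv_mult_group[OF y x] .
  finally show ?thesis unfolding twist_def by simp
qed

lemma twist_cay_adj:
  assumes H: "subgroup H G" "\<forall>x\<in>H. \<forall>y\<in>H. x \<otimes> y = y \<otimes> x"
    and T: "T \<subseteq> H" and x: "x \<in> H" and adj: "cay_adj G T x y"
  shows "cay_adj G T (twist G b x) (twist G b y)"
proof -
  from adj obtain s z where s: "s \<in> T" "z = s \<or> z = inv s" "y = x \<otimes> z"
    unfolding cay_adj_def by blast
  have sH: "s \<in> H" using s(1) T by blast
  then have zH: "z \<in> H" using s(2) subgroup.m_inv_closed[OF H(1)] by auto
  have xc: "x \<in> carrier G" and zc: "z \<in> carrier G" and sc: "s \<in> carrier G"
    using x zH sH subgroup.mem_carrier[OF H(1)] by auto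
  have "twist G b y = twist G b x \<otimes> twist G b z"
    unfolding s(3) using twist_mult[OF xc zc bspec[OF bspec[OF H(2) x] zH]] .
  moreover have "twist G b z = s \<or> twist G b z = inv s"
    using s(2) sc unfolding twist_def by auto
  ultimately have "twist G b y = twist G b x \<otimes> s \<or> twist G b y = twist G b x \<otimes> inv s"
    by auto
  with s(1) show ?thesis unfolding cay_adj_def by (intro bexI[of _ s])
qed

lemma twist_conjugate:
  assumes "s \<in> carrier G" "y \<in> carrier G"
    and "if c then s \<otimes> y = y \<otimes> s else inv s \<otimes> y \<otimes> s = inv y"
  shows "s \<otimes> twist G c y = y \<otimes> s"
proof (cases c)
  case False
  then have "s \<otimes> twist G c y = s \<otimes> (inv s \<otimes> y \<otimes> s)" using assms by (simp add: twist_def)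
  also have "\<dots> = y \<otimes> s" using assms(1,2) by (simp add: m_assoc[symmetric])
  finally show ?thesis .
qed (use assms in \<open>simp add: twist_def\<close>)

end

section \<open>Lifting paths of the quotient\<close>

context normal
begin

lemma quotient_cay_adj_step:
  assumes S: "S \<subseteq> carrier G" and adj: "cay_adj (G Mod H) ((\<lambda>s. H #> s) ` S) C C'"
  shows "\<exists>s. s \<in> carrier G \<and> (s \<in> S \<or> inv s \<in> S) \<and> C' = C <#> (H #> s)"
proof -
  from adj obtain s where s: "s \<in> S"
    and step: "C' = C <#> (H #> s) \<or> C' = C <#> inv\<^bsub>G Mod H\<^esub> (H #> s)"
    unfolding cay_adj_def by auto
  have sc: "s \<in> carrier G" using s S by blast
  from step show ?thesis
  proof
    assume "C' = C <#> (H #> s)"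
    then show ?thesis using s sc by (intro exI[of _ s]) simp
  next
    assume C': "C' = C <#> inv\<^bsub>G Mod H\<^esub> (H #> s)"
    have "H #> s \<in> carrier (G Mod H)" using sc by (simp add: FactGroup_def rcosetsI subset)
    then have "inv\<^bsub>G Mod H\<^esub> (H #> s) = H #> inv s" by (simp add: inv_FactGroup rcos_inv sc)
    then show ?thesis using C' s sc by (intro exI[of _ "inv s"]) simp
  qed
qed

lemma quotient_path_lift:
  assumes S: "S \<subseteq> carrier G" and Cs: "Cs \<noteq> []" "set Cs \<subseteq> rcosets H"
    and path: "\<And>i. Suc i < length Cs \<Longrightarrow>
      cay_adj (G Mod H) ((\<lambda>s. H #> s) ` S) (Cs ! i) (Cs ! Suc i)"
  obtains t s where "\<And>k. k < length Cs \<Longrightarrow> t k \<in> carrier G \<and> Cs ! k = H #> t k"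
    and "\<And>k. Suc k < length Cs \<Longrightarrow>
      s k \<in> carrier G \<and> (s k \<in> S \<or> inv s k \<in> S) \<and> t (Suc k) = t k \<otimes> s k"
proof -
  have "\<forall>k. \<exists>s. Suc k < length Cs \<longrightarrow>
      s \<in> carrier G \<and> (s \<in> S \<or> inv s \<in> S) \<and> Cs ! Suc k = Cs ! k <#> (H #> s)"
    using quotient_cay_adj_step[OF S path] by blast
  then obtain s where s: "\<And>k. Suc k < length Cs \<Longrightarrow>
      s k \<in> carrier G \<and> (s k \<in> S \<or> inv s k \<in> S) \<and> Cs ! Suc k = Cs ! k <#> (H #> s k)"
    by metis
  have "Cs ! 0 \<in> rcosets H" using Cs nth_mem[of 0 Cs] by auto
  then obtain t0 where t0: "t0 \<in> carrier G" "Cs ! 0 = H #> t0"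
    by (auto simp: RCOSETS_def)
  define t where "t = rec_nat t0 (\<lambda>k r. r \<otimes> s k)"
  have t_Suc: "t (Suc k) = t k \<otimes> s k" for k by (simp add: t_def)
  have "t k \<in> carrier G \<and> Cs ! k = H #> t k" if "k < length Cs" for k
    using that
  proof (induction k)
    case (Suc k)
    then have IH: "t k \<in> carrier G" "Cs ! k = H #> t k" by simp_all
    have "s k \<in> carrier G" "Cs ! Suc k = Cs ! k <#> (H #> s k)" using s[OF Suc.prems] by auto
    then show ?case using IH rcos_sum by (simp add: t_Suc)
  qed (simp add: t_def t0)
  then show thesis using that s t_Suc by blast
qed

text \<open>Placing, in each coset C_k = H t_k, a bijective image phi_k of a listing of H gives a
  bijection from the grid onto G (Lagrange's theorem supplies the cardinality).\<close>
lemma coset_grid_bij: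
  assumes fin: "finite (carrier G)"
    and Cs: "distinct Cs" "set Cs = rcosets H"
    and t: "\<And>k. k < length Cs \<Longrightarrow> t k \<in> carrier G \<and> Cs ! k = H #> t k"
    and cs: "distinct cs" "set cs = H"
    and phi: "\<And>k. \<phi> k ` H \<subseteq> H" "\<And>k. inj_on (\<phi> k) H"
  shows "bij_betw (\<lambda>(k, j). t k \<otimes> \<phi> k (cs ! j)) ({0..<length Cs} \<times> {0..<length cs})
           (carrier G)"
    (is "bij_betw ?f ?grid _")
proof -
  have val: "\<phi> k (cs ! j) \<in> H" if "j < length cs" for k j
    using phi(1) cs(2) that nth_mem by blast
  have into: "?f ` ?grid \<subseteq> carrier G"
    using t val by (auto simp: subset)
  have coset: "H #> (t k \<otimes> h) = Cs ! k" if "k < length Cs" "h \<in> H" for k h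
  proof -
    have tk: "t k \<in> carrier G" "Cs ! k = H #> t k" using t[OF that(1)] by auto
    have "t k \<otimes> h \<in> t k <# H" using that(2) unfolding l_coset_def by blast
    then have "t k \<otimes> h \<in> H #> t k" using coset_eq tk(1) by blast
    then show ?thesis using repr_independence[OF _ tk(1) is_subgroup] tk(2) by simp
  qed
  have inj: "inj_on ?f ?grid"
  proof (intro inj_onI)
    fix p q assume p: "p \<in> ?grid" and q: "q \<in> ?grid" and eq: "?f p = ?f q"
    obtain k j k' j' where pq: "p = (k, j)" "q = (k', j')" by (cases p, cases q) auto
    have ranges: "k < length Cs" "j < length cs" "k' < length Cs" "j' < length cs"
      using p q pq by auto
    have "Cs ! k = H #> ?f p" using coset ranges val pq by simp
    also have "\<dots> = Cs ! k'" using coset ranges val pq eq by simp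
    finally have k: "k = k'" using Cs(1) ranges by (simp add: nth_eq_iff_index_eq)
    have "t k \<otimes> \<phi> k (cs ! j) = t k \<otimes> \<phi> k (cs ! j')" using eq pq k by simp
    then have "\<phi> k (cs ! j) = \<phi> k (cs ! j')"
      using t ranges val subset by (simp add: subset_iff)
    then have "cs ! j = cs ! j'"
      using inj_onD[OF phi(2)] cs(2) ranges nth_mem by blast
    then show "p = q" using cs(1) ranges pq k by (simp add: nth_eq_iff_index_eq)
  qed
  have "card ?grid = card (rcosets H) * card H"
    using Cs cs by (simp add: distinct_card[symmetric])
  also have "\<dots> = card (carrier G)"
    using lagrange is_subgroup by (simp add: order_def)
  finally have "card (?f ` ?grid) = card (carrier G)"
    using inj by (simp add: card_image)
  then show ?thesis
    using inj into fin card_subset_eq unfolding bij_betw_def by blast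
qed

end

text \<open>The lift of the prism: the vertex (k,j) goes to t_k c_j^{+-1}, the sign being the
  orientation that flips at each step s_k inverting H.\<close>
definition twisted_lift ::
    "('a, 'b) monoid_scheme \<Rightarrow> 'a set \<Rightarrow> (nat \<Rightarrow> 'a) \<Rightarrow> (nat \<Rightarrow> 'a) \<Rightarrow> 'a list \<Rightarrow> nat \<times> nat \<Rightarrow> 'a"
  where "twisted_lift G H t s cs = (\<lambda>(k, j). t k \<otimes>\<^bsub>G\<^esub>
     twist G (orientation (\<lambda>k. \<forall>y\<in>H. s k \<otimes>\<^bsub>G\<^esub> y = y \<otimes>\<^bsub>G\<^esub> s k) k) (cs ! j))"

context group
begin

lemma twisted_row_adj:
  assumes H: "subgroup H G" "\<forall>x\<in>H. \<forall>y\<in>H. x \<otimes> y = y \<otimes> x"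
    and T: "T \<subseteq> H" "T \<subseteq> S" and a: "a \<in> carrier G"
    and x: "x \<in> H" and adj: "cay_adj G T x y"
  shows "cay_adj G S (a \<otimes> twist G b x) (a \<otimes> twist G b y)"
proof -
  have TG: "T \<subseteq> carrier G" using T(1) subgroup.subset[OF H(1)] by blast
  have "twist G b x \<in> carrier G" using subgroup.mem_carrier[OF H(1) twist_closed[OF H(1) x]] .
  moreover have "cay_adj G T (twist G b x) (twist G b y)" by (rule twist_cay_adj[OF H T(1) x adj])
  ultimately have "cay_adj G T (a \<otimes> twist G b x) (a \<otimes> twist G b y)"
    by (rule cay_adj_lmult[OF TG a])
  then show ?thesis using T(2) unfolding cay_adj_def by blast
qed

lemma twisted_column_adj:
  assumes H: "subgroup H G" and h: "h \<in> H" and a: "a \<in> carrier G"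
    and s: "s \<in> carrier G" "s \<in> S \<or> inv s \<in> S"
    and dich: "(\<forall>y\<in>H. s \<otimes> y = y \<otimes> s) \<or> (\<forall>y\<in>H. inv s \<otimes> y \<otimes> s = inv y)"
  shows "cay_adj G S (a \<otimes> twist G b h) (a \<otimes> s \<otimes> twist G (b \<longleftrightarrow> (\<forall>y\<in>H. s \<otimes> y = y \<otimes> s)) h)"
proof -
  define c where "c = (\<forall>y\<in>H. s \<otimes> y = y \<otimes> s)"
  define y where "y = twist G b h"
  have yH: "y \<in> H" unfolding y_def using twist_closed[OF H h] .
  have yc: "y \<in> carrier G" using subgroup.mem_carrier[OF H yH] .
  have hc: "h \<in> carrier G" using subgroup.mem_carrier[OF H h] .
  have "if c then s \<otimes> y = y \<otimes> s else inv s \<otimes> y \<otimes> s = inv y"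
    using dich yH unfolding c_def by auto
  then have conj: "s \<otimes> twist G c y = y \<otimes> s" by (rule twist_conjugate[OF s(1) yc])
  have "twist G (b \<longleftrightarrow> c) h \<in> carrier G"
    using subgroup.mem_carrier[OF H twist_closed[OF H h]] .
  then have "a \<otimes> s \<otimes> twist G (b \<longleftrightarrow> c) h = a \<otimes> (s \<otimes> twist G c y)"
    using a s(1) hc by (simp add: y_def twist_twist m_assoc)
  also have "\<dots> = a \<otimes> y \<otimes> s" using a s(1) yc by (simp add: conj m_assoc)
  finally show ?thesis using cay_adjI[OF s] unfolding y_def c_def by simp
qed

lemma twisted_lift_adj:
  assumes S: "S \<subseteq> carrier G" and T: "T \<subseteq> H" "T \<subseteq> S"
    and H: "subgroup H G" "\<forall>x\<in>H. \<forall>y\<in>H. x \<otimes> y = y \<otimes> x"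
    and dich: "\<forall>g\<in>carrier G. (\<forall>y\<in>H. g \<otimes> y = y \<otimes> g) \<or> (\<forall>y\<in>H. inv g \<otimes> y \<otimes> g = inv y)"
    and cs: "set cs \<subseteq> H" "\<And>j. j < length cs \<Longrightarrow> cay_adj G T (cs ! j) (cs ! (Suc j mod length cs))"
    and t: "\<And>k. k < m \<Longrightarrow> t k \<in> carrier G"
    and s: "\<And>k. Suc k < m \<Longrightarrow>
      s k \<in> carrier G \<and> (s k \<in> S \<or> inv s k \<in> S) \<and> t (Suc k) = t k \<otimes> s k"
    and p: "p \<in> {0..<m} \<times> {0..<length cs}" and q: "q \<in> {0..<m} \<times> {0..<length cs}"
    and adj: "prism_adj (length cs) p q"
  shows "cay_adj G S (twisted_lift G H t s cs p) (twisted_lift G H t s cs q)"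
proof -
  define f where "f = twisted_lift G H t s cs"
  have csH: "cs ! j \<in> H" if "j < length cs" for j using that cs(1) nth_mem by blast
  have row: "cay_adj G S (f (k, j)) (f (k, Suc j mod length cs))"
    if "k < m" "j < length cs" for k j
    unfolding f_def twisted_lift_def
    using twisted_row_adj[OF H T t[OF that(1)] csH cs(2)] that(2) by simp
  have column: "cay_adj G S (f (k, j)) (f (Suc k, j))"
    if "Suc k < m" "j < length cs" for k j
  proof -
    have sk: "s k \<in> carrier G" "s k \<in> S \<or> inv s k \<in> S" "t (Suc k) = t k \<otimes> s k"
      using s[OF that(1)] by auto
    show ?thesis
      unfolding f_def twisted_lift_def
      using twisted_column_adj[OF H(1) csH[OF that(2)] t sk(1,2)] dich sk that by simp
  qed
  have carrier: "f p \<in> carrier G" if pm: "p \<in> {0..<m} \<times> {0..<length cs}" for p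
  proof -
    obtain k j where p: "p = (k, j)" "k < m" "j < length cs" using pm by (cases p) auto
    show ?thesis
      unfolding f_def twisted_lift_def p(1)
      using t[OF p(2)] subgroup.mem_carrier[OF H(1) twist_closed[OF H(1) csH[OF p(3)]]] by simp
  qed
  have sym: "cay_adj G S (f p) (f q)"
    if "p \<in> {0..<m} \<times> {0..<length cs}" "q \<in> {0..<m} \<times> {0..<length cs}"
      and "cay_adj G S (f q) (f p)" for p q
    using cay_adj_sym[OF S carrier[OF that(2)] that(3)] .
  show ?thesis
    using prism_adj_preserved[of m "length cs" "cay_adj G S" f, OF sym row column p q adj]
    unfolding f_def .
qed

lemma ham_cycle_from_quotient:
  assumes fin: "finite (carrier G)" and S: "S \<subseteq> carrier G" and TS: "T \<subseteq> S"
    and H: "subgroup H G" "T \<subseteq> H" "H \<noteq> {\<one>}"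
    and comm: "\<forall>x\<in>H. \<forall>y\<in>H. x \<otimes> y = y \<otimes> x"
    and dich: "\<forall>g\<in>carrier G. (\<forall>y\<in>H. g \<otimes> y = y \<otimes> g) \<or> (\<forall>y\<in>H. inv g \<otimes> y \<otimes> g = inv y)"
    and cycle: "ham_cycle H (cay_adj G T)"
    and path: "ham_path (carrier (G Mod H)) (cay_adj (G Mod H) ((\<lambda>s. H #> s) ` S))"
  shows "ham_cycle (carrier G) (cay_adj G S)"
proof -
  interpret N: normal H G using normal_if_centralised_or_inverted[OF H(1) dich] .
  obtain cs where cs: "cs \<noteq> []" "distinct cs" "set cs = H"
     "\<And>j. j < length cs \<Longrightarrow> cay_adj G T (cs ! j) (cs ! (Suc j mod length cs))"
    using cycle unfolding ham_cycle_def by blast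
  \<comment> \<open>H is nontrivial, so the cycle has length at least 2\<close>
  obtain x where x: "x \<in> H" "x \<noteq> \<one>" using H(3) N.one_closed by blast
  then have "card {\<one>, x} \<le> card H" using N.one_closed cs(3) by (intro card_mono) auto
  then have n: "length cs \<ge> 2" using x(2) distinct_card[OF cs(2)] cs(3) by simp
  obtain Cs where Cs: "distinct Cs" "set Cs = rcosets H"
    "\<And>i. Suc i < length Cs \<Longrightarrow> cay_adj (G Mod H) ((\<lambda>s. H #> s) ` S) (Cs ! i) (Cs ! Suc i)"
    using path unfolding ham_path_def by (auto simp: FactGroup_def)
  then obtain m where m: "length Cs = Suc m"
    using N.subgroup_in_rcosets[OF is_group] by (cases Cs) auto
  have Cs_cosets: "Cs \<noteq> []" "set Cs \<subseteq> rcosets H" using m Cs(2) by auto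
  obtain t s where t: "\<And>k. k < length Cs \<Longrightarrow> t k \<in> carrier G \<and> Cs ! k = H #> t k"
    and s: "\<And>k. Suc k < length Cs \<Longrightarrow>
      s k \<in> carrier G \<and> (s k \<in> S \<or> inv s k \<in> S) \<and> t (Suc k) = t k \<otimes> s k"
    using N.quotient_path_lift[OF S Cs_cosets Cs(3)] by blast
  have bij: "bij_betw (twisted_lift G H t s cs) ({0..<Suc m} \<times> {0..<length cs}) (carrier G)"
    unfolding twisted_lift_def
    using N.coset_grid_bij[OF fin Cs(1,2) t cs(2,3),
        of "\<lambda>k. twist G (orientation (\<lambda>k. \<forall>y\<in>H. s k \<otimes> y = y \<otimes> s k) k)"]
      m twist_closed[OF H(1)] inj_on_twist[OF N.subset] by auto
  show ?thesis
  proof (rule ham_cycle_image[OF prism_ham_cycle[OF n] bij])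
    fix p q assume pq: "p \<in> {0..<Suc m} \<times> {0..<length cs}" "q \<in> {0..<Suc m} \<times> {0..<length cs}"
      and adj: "prism_adj (length cs) p q"
    have t': "t k \<in> carrier G" if "k < Suc m" for k using t m that by auto
    have s': "s k \<in> carrier G \<and> (s k \<in> S \<or> inv s k \<in> S) \<and> t (Suc k) = t k \<otimes> s k"
      if "Suc k < Suc m" for k using s m that by auto
    show "cay_adj G S (twisted_lift G H t s cs p) (twisted_lift G H t s cs q)"
      using twisted_lift_adj[where cs = cs and m = "Suc m" and t = t and s = s,
          OF S H(2) TS H(1) comm dich _ cs(4) t' s' pq adj] cs(3) by simp
  qed
qed

end

theorem mainTheorem3:
  fixes G :: "('a, 'b) monoid_scheme" (structure) and S :: "'a set" and T :: "'a set"
  assumes "group G"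
    and "finite (carrier G)"
    and "S \<subseteq> carrier G"
    and "generate G S = carrier G"
    and "T \<subseteq> S"
    and "\<forall>x\<in>generate G T. \<forall>y\<in>generate G T. x \<otimes> y = y \<otimes> x"
    and "generate G T \<noteq> {\<one>}"
    and "\<forall>g\<in>carrier G. (\<forall>y\<in>generate G T. g \<otimes> y = y \<otimes> g)
                        \<or> (\<forall>y\<in>generate G T. inv g \<otimes> y \<otimes> g = inv y)"
    and "ham_cycle (generate G T) (cay_adj G T)"
    and "ham_path (carrier (G Mod (generate G T)))
                  (cay_adj (G Mod (generate G T)) ((\<lambda>s. generate G T #> s) ` S))"
  shows "ham_cycle (carrier G) (cay_adj G S)"
proof -
  interpret group G by fact
  have "T \<subseteq> carrier G" using assms(3,5) by blast
  then have "subgroup (generate G T) G" "T \<subseteq> generate G T"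
    using generate_is_subgroup generate.incl by auto
  then show ?thesis
    using ham_cycle_from_quotient[of S T "generate G T"] assms by blast
qed

end
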